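(* Let $\mathcal{T}$ be a tower with $\mathbb{K}_0=\emptyset$ whose maps are elementary inclusions or elementary contractions, of dimension $\Delta$, with $n$ elementary inclusions, and let $\mathcal{W}$ be its contracting forest. If $N$ is an independent set of nodes of $\mathcal{W}$, then $\sum_{x\in N}|E(x)|\le(\Delta+1)\cdot n$.
   Context: Elementary inclusion: $\mathbb{K}_{i+1}=\mathbb{K}_i\cup\{\sigma\}$; elementary contraction of distinct vertices $u,v$: one of them disappears, both are mapped to the other, identity elsewhere. Dimension of the tower = maximal simplex dimension. Contracting forest: $\mathcal{W}_0=\emptyset$; if $\phi_{j-1}$ includes a simplex of dimension $>0$, $\mathcal{W}_j=\mathcal{W}_{j-1}$; if it includes a vertex $w$, $\mathcal{W}_j$ is $\mathcal{W}_{j-1}$ plus a new single-node tree labeled $w$; if it contracts $u$ and $v$, the two trees of $\mathcal{W}_{j-1}$ whose roots are labeled $u$ and $v$ are merged by making their roots the two children of a new root labeled with the image vertex. (The roots of $\mathcal{W}_j$ correspond bijectively to the vertices of $\mathbb{K}_j$.) $\mathcal{W}=\mathcal{W}_m$. Let $\Sigma$ be the collection of the $n$ simplices added at elementary inclusions; for $\sigma\in\Sigma$ added by $\phi_i$, each vertex of $\sigma$ is the label of a root of $\mathcal{W}_{i+1}$, hence corresponds to a node of $\mathcal{W}$. For a node $x$, $E(x)\subseteq\Sigma$ is the set of those $\sigma$ having at least one vertex whose corresponding node lies in the subtree of $\mathcal{W}$ rooted at $x$. A set of nodes is independent if no node in it is a proper ancestor of another. *)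

theory Defs
  imports Main
begin

text \<open>A tower starting at the empty complex is given by the list of its maps.
  Contr u v: elementary contraction of the distinct vertices u and v, where v
  disappears and both u and v are mapped to u (the image vertex is u).\<close>

datatype 'v tower_op = Incl "'v set" | Contr 'v 'v

fun apply_op :: "'v tower_op \<Rightarrow> 'v set set \<Rightarrow> 'v set set" where
  "apply_op (Incl s) K = insert s K"
| "apply_op (Contr u v) K = (\<lambda>s. (\<lambda>x. if x = v then u else x) ` s) ` K"

definition cplx :: "'v tower_op list \<Rightarrow> nat \<Rightarrow> 'v set set" where
  "cplx ops j = foldl (\<lambda>K op. apply_op op K) {} (take j ops)"

fun valid_op :: "'v set set \<Rightarrow> 'v tower_op \<Rightarrow> bool" where
  "valid_op K (Incl s) \<longleftrightarrow> finite s \<and> s \<noteq> {} \<and> s \<notin> K \<and>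
      (\<forall>t. t \<subset> s \<and> t \<noteq> {} \<longrightarrow> t \<in> K)"
| "valid_op K (Contr u v) \<longleftrightarrow> u \<noteq> v \<and> {u} \<in> K \<and> {v} \<in> K"

definition valid_tower :: "'v tower_op list \<Rightarrow> bool" where
  "valid_tower ops \<longleftrightarrow> (\<forall>i < length ops. valid_op (cplx ops i) (ops ! i))"

definition is_incl :: "'v tower_op \<Rightarrow> bool" where
  "is_incl op \<longleftrightarrow> (\<exists>s. op = Incl s)"

definition n_incl :: "'v tower_op list \<Rightarrow> nat" where
  "n_incl ops = card {i. i < length ops \<and> is_incl (ops ! i)}"

definition tower_dim :: "'v tower_op list \<Rightarrow> nat" where
  "tower_dim ops = Max (insert 0 {card s - 1 | s j. j \<le> length ops \<and> s \<in> cplx ops j})"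

text \<open>A node is identified with the index i of the map
  phi_i that created it (inclusion of a vertex, or a contraction).
  root ops j w = Some x iff w is a vertex of K_j labelling the root x of W_j.\<close>
fun root :: "'v tower_op list \<Rightarrow> nat \<Rightarrow> 'v \<Rightarrow> nat option" where
  "root ops 0 = (\<lambda>_. None)"
| "root ops (Suc i) = (case ops ! i of
      Incl s \<Rightarrow> (if card s = 1 then (root ops i)(the_elem s := Some i) else root ops i)
    | Contr u v \<Rightarrow> ((root ops i)(v := None))(u := Some i))"

definition nodes :: "'v tower_op list \<Rightarrow> nat set" where
  "nodes ops = {i. i < length ops \<and> ((\<exists>w. ops ! i = Incl {w}) \<or> (\<exists>u v. ops ! i = Contr u v))}"

definition child_rel :: "'v tower_op list \<Rightarrow> (nat \<times> nat) set" where
  "child_rel ops = {(c, p). p < length ops \<and>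
      (\<exists>u v. ops ! p = Contr u v \<and> (root ops p u = Some c \<or> root ops p v = Some c))}"

definition subtree :: "'v tower_op list \<Rightarrow> nat \<Rightarrow> nat set" where
  "subtree ops x = {y. (y, x) \<in> (child_rel ops)\<^sup>*}"

text \<open>E(x): inclusion steps i (indexing Sigma) whose simplex has a vertex whose
  corresponding node (root of W_{i+1} with that label) lies in the subtree of x.\<close>
definition E :: "'v tower_op list \<Rightarrow> nat \<Rightarrow> nat set" where
  "E ops x = {i. i < length ops \<and> (\<exists>s. ops ! i = Incl s \<and>
      (\<exists>a\<in>s. \<exists>y. root ops (Suc i) a = Some y \<and> y \<in> subtree ops x))}"

definition independent :: "'v tower_op list \<Rightarrow> nat set \<Rightarrow> bool" where
  "independent ops N \<longleftrightarrow> (\<forall>x\<in>N. \<forall>y\<in>N. (y, x) \<notin> (child_rel ops)\<^sup>+)"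

end

theory Submission
  imports Defs
begin

text \<open>Every node of the contracting forest has at most one parent, so the subtrees rooted at
  the nodes of an independent set are pairwise disjoint. Hence each vertex of an included
  simplex lies in the subtree of at most one node of the set, and a simplex \<open>\<sigma>\<close> belongs to
  \<open>E(x)\<close> for at most \<open>|\<sigma>| \<le> \<Delta> + 1\<close> nodes \<open>x\<close> of the set. Double counting the pairs
  \<open>(x, \<sigma>)\<close> with \<open>\<sigma> \<in> E(x)\<close> gives the bound.\<close>

lemma root_less: "root ops j w = Some c \<Longrightarrow> c < j"
proof (induction j arbitrary: w c)
  case 0
  then show ?case by simp
next
  case (Suc i)
  then show ?case
    by (cases "ops ! i") (auto split: if_splits, fastforce+)
qed

lemma root_inj: "root ops j w1 = Some c \<Longrightarrow> root ops j w2 = Some c \<Longrightarrow> w1 = w2"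
proof (induction j arbitrary: w1 w2 c)
  case 0
  then show ?case by simp
next
  case (Suc i)
  show ?case
  proof (cases "ops ! i")
    case (Incl s)
    then show ?thesis using Suc root_less[of ops i]
      by (auto split: if_splits; metis less_irrefl)
  next
    case (Contr u v)
    then show ?thesis using Suc root_less[of ops i]
      by (auto split: if_splits; metis less_irrefl)
  qed
qed

lemma root_Suc_old: "root ops (Suc k) w = Some c \<Longrightarrow> c \<noteq> k \<Longrightarrow> \<exists>w'. root ops k w' = Some c"
  by (cases "ops ! k") (auto split: if_splits)

lemma root_earlier:
  assumes "j \<le> k" "root ops k w = Some c" "c < j"
  shows "\<exists>w'. root ops j w' = Some c"
  using assms
proof (induction k arbitrary: w rule: dec_induct)
  case base
  then show ?case by blast
next
  case (step k)
  then obtain w' where "root ops k w' = Some c" using root_Suc_old[of ops k w c] by fastforce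
  then show ?case using step by blast
qed

lemma root_Contr_not_root:
  assumes contr: "ops ! p = Contr u v" and child: "root ops p u = Some c \<or> root ops p v = Some c"
  shows "root ops (Suc p) w \<noteq> Some c"
proof
  assume w: "root ops (Suc p) w = Some c"
  have "c < p" using child root_less by metis
  with w contr have "w \<noteq> u" "w \<noteq> v" "root ops p w = Some c"
    by (auto split: if_splits)
  then show False using child root_inj by metis
qed

lemma single_valued_child_rel: "single_valued (child_rel ops)"
proof -
  have False if c1: "(c, p1) \<in> child_rel ops" and c2: "(c, p2) \<in> child_rel ops"
    and "p1 < p2" for c p1 p2
  proof -
    obtain u v where contr: "ops ! p1 = Contr u v"
      and child: "root ops p1 u = Some c \<or> root ops p1 v = Some c"
      using c1 by (auto simp: child_rel_def)
    obtain w where "root ops p2 w = Some c"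
      using c2 by (auto simp: child_rel_def)
    moreover have "c < p1" using child root_less by metis
    ultimately obtain w' where "root ops (Suc p1) w' = Some c"
      using root_earlier[of "Suc p1" p2 ops w c] \<open>p1 < p2\<close> by auto
    then show False using root_Contr_not_root[OF contr child] by blast
  qed
  then show ?thesis by (metis single_valuedI linorder_neqE_nat)
qed

lemma independent_subtrees_disjoint:
  assumes "independent ops N" "x1 \<in> N" "x2 \<in> N"
    and "y \<in> subtree ops x1" "y \<in> subtree ops x2"
  shows "x1 = x2"
proof (rule ccontr)
  assume "x1 \<noteq> x2"
  moreover have "(x1, x2) \<in> (child_rel ops)\<^sup>* \<or> (x2, x1) \<in> (child_rel ops)\<^sup>*"
    using single_valued_confluent[OF single_valued_child_rel] assms(4,5)
    unfolding subtree_def by blast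
  ultimately have "(x1, x2) \<in> (child_rel ops)\<^sup>+ \<or> (x2, x1) \<in> (child_rel ops)\<^sup>+"
    by (auto simp: rtrancl_eq_or_trancl)
  then show False using assms(1-3) unfolding independent_def by blast
qed

lemma finite_foldl_apply_op: "finite K \<Longrightarrow> finite (foldl (\<lambda>K op. apply_op op K) K ops)"
proof (induction ops arbitrary: K)
  case (Cons op ops)
  then show ?case by (cases op) auto
qed simp

lemma finite_cplx: "finite (cplx ops j)"
  unfolding cplx_def by (simp add: finite_foldl_apply_op)

lemma cplx_Suc: "i < length ops \<Longrightarrow> cplx ops (Suc i) = apply_op (ops ! i) (cplx ops i)"
  unfolding cplx_def by (simp add: take_Suc_conv_app_nth)

lemma card_Incl_le_tower_dim:
  assumes "i < length ops" "ops ! i = Incl s"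
  shows "card s \<le> tower_dim ops + 1"
proof -
  let ?D = "{card s - 1 | s j. j \<le> length ops \<and> s \<in> cplx ops j}"
  have "?D \<subseteq> (\<lambda>s. card s - 1) ` (\<Union>j\<le>length ops. cplx ops j)" by auto
  then have "finite ?D" by (rule finite_subset) (simp add: finite_cplx)
  moreover have "s \<in> cplx ops (Suc i)" using cplx_Suc[OF assms(1)] assms(2) by simp
  then have "card s - 1 \<in> ?D" using assms(1) by (intro CollectI exI[of _ s] exI[of _ "Suc i"]) auto
  ultimately have "card s - 1 \<le> tower_dim ops" unfolding tower_dim_def by simp
  then show ?thesis by simp
qed

lemma card_independent_E_le_card_simplex:
  assumes "independent ops N" "ops ! i = Incl s" "finite s"
  shows "card {x \<in> N. i \<in> E ops x} \<le> card s"
proof -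
  define owner where "owner a =
      (THE x. x \<in> N \<and> (\<exists>y. root ops (Suc i) a = Some y \<and> y \<in> subtree ops x))" for a
  have "{x \<in> N. i \<in> E ops x} \<subseteq> owner ` s"
  proof
    fix x assume "x \<in> {x \<in> N. i \<in> E ops x}"
    then obtain a y where "x \<in> N" "a \<in> s" "root ops (Suc i) a = Some y" "y \<in> subtree ops x"
      using assms(2) unfolding E_def by auto
    moreover from this have "owner a = x" unfolding owner_def
      using independent_subtrees_disjoint[OF assms(1)] by (intro the_equality) auto
    ultimately show "x \<in> owner ` s" by blast
  qed
  then show ?thesis
    using assms(3) by (meson card_image_le card_mono finite_imageI le_trans)
qed

theorem lemma7:
  fixes ops :: "'v tower_op list" and N :: "nat set"
  assumes "valid_tower ops"
    and "N \<subseteq> nodes ops"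
    and "independent ops N"
  shows "(\<Sum>x\<in>N. card (E ops x)) \<le> (tower_dim ops + 1) * n_incl ops"
proof -
  define I where "I = {i. i < length ops \<and> is_incl (ops ! i)}"
  have "finite I" unfolding I_def by simp
  have "finite N" using assms(2) finite_subset[of _ "{..<length ops}"] by (auto simp: nodes_def)
  have "E ops x = {i \<in> I. i \<in> E ops x}" for x
    unfolding E_def I_def is_incl_def by auto
  then have "(\<Sum>x\<in>N. card (E ops x)) = (\<Sum>i\<in>I. card {x \<in> N. i \<in> E ops x})"
    using sum_multicount_gen[OF \<open>finite N\<close> \<open>finite I\<close>, of "\<lambda>x i. i \<in> E ops x"] by simp
  also have "\<dots> \<le> of_nat (card I) * (tower_dim ops + 1)"
  proof (rule sum_bounded_above)
    fix i assume "i \<in> I"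
    then obtain s where s: "i < length ops" "ops ! i = Incl s"
      unfolding I_def is_incl_def by auto
    then have "finite s" using assms(1) unfolding valid_tower_def by (metis valid_op.simps(1))
    then show "card {x \<in> N. i \<in> E ops x} \<le> tower_dim ops + 1"
      using card_independent_E_le_card_simplex[OF assms(3) s(2)] card_Incl_le_tower_dim[OF s]
      by linarith
  qed
  also have "\<dots> = (tower_dim ops + 1) * n_incl ops" unfolding n_incl_def I_def by simp
  finally show ?thesis .
qed

end
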